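(* In the LCD setting of the context, with generic parameters, fix a context $k$ whose intervention target is node $k$, and let $D^{(k)}\in\mathbb{R}^{q\times q}$ be diagonal with $D^{(k)}_{j,j}\in\{1,-1\}$ for $j\neq k$ and $D^{(k)}_{k,k}\notin\{0,1,-1\}$. For $j_1,j_2\in\mathrm{an}(k)$, there exists $\alpha\in\mathbb{R}$ such that $$(I-\Lambda^{(0)})^{-1}_{i,j_1}-\big((I-\Lambda^{(k)})^{-1}D^{(k)}\big)_{i,j_2}=\alpha\Big((I-\Lambda^{(0)})^{-1}_{i,k}-\big((I-\Lambda^{(k)})^{-1}D^{(k)}\big)_{i,k}\Big)$$ for all $i\in[q]$ if and only if $j_1=j_2$ and $D^{(k)}_{j_1,j_1}=1$.
   Context: LCD setting: $\Lambda^{(0)}\in\mathbb{R}^{q\times q}$ with $\lambda^{(0)}_{i,j}\ne0$ iff $j\to i$ is an edge of a DAG $\mathcal{G}$ on $[q]$, with generic nonzero entries; $\Lambda^{(k)}$ agrees with $\Lambda^{(0)}$ except in row $k$, which is either zero (perfect intervention) or has generic entries with $\lambda^{(k)}_{k,j}\ne\lambda^{(0)}_{k,j}$ whenever $\lambda^{(0)}_{k,j}\ne0$ (soft intervention). $\mathrm{an}(k)$ is the set of ancestors of $k$ in $\mathcal{G}$ (nodes $m\ne k$ with a directed path $m\to\cdots\to k$). *)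

theory Defs
  imports "HOL-Analysis.Analysis"
begin

text \<open>Nodes of the DAG are the elements of a finite type 'n (so q = CARD('n)).
  The graph is an edge set E; (j,i) \<in> E means the edge j \<rightarrow> i.\<close>

definition ancestors :: "('n \<times> 'n) set \<Rightarrow> 'n \<Rightarrow> 'n set" where
  "ancestors E k = {m. m \<noteq> k \<and> (m, k) \<in> E\<^sup>+}"

text \<open>Free parameters: Inl (j,i) for each edge j \<rightarrow> i (entries of Lambda^(0)),
  Inr j for each parent j of k (entries of the intervened row k in a soft intervention).\<close>

definition param_index :: "('n \<times> 'n) set \<Rightarrow> 'n \<Rightarrow> (('n \<times> 'n) + 'n) set" where
  "param_index E k = Inl ` E \<union> Inr ` {j. (j, k) \<in> E}"

definition Lam0 :: "('n \<times> 'n) set \<Rightarrow> (('n \<times> 'n) + 'n \<Rightarrow> real) \<Rightarrow> real^'n^'n" where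
  "Lam0 E \<theta> = (\<chi> i j. if (j, i) \<in> E then \<theta> (Inl (j, i)) else 0)"

definition Lamk :: "('n \<times> 'n) set \<Rightarrow> bool \<Rightarrow> 'n \<Rightarrow> (('n \<times> 'n) + 'n \<Rightarrow> real) \<Rightarrow> real^'n^'n" where
  "Lamk E perfect k \<theta> = (\<chi> i j. if i = k then
       (if perfect then 0 else if (j, k) \<in> E then \<theta> (Inr j) else 0)
     else Lam0 E \<theta> $ i $ j)"

end

theory Submission
  imports Defs
begin

text \<open>Write P = (I - \<Lambda>0)^-1 and Q = (I - \<Lambda>k)^-1. Since the graph is acyclic, both are
  unipotent along the DAG: entry (i, j) vanishes unless there is a directed path from j to i,
  and the diagonal is 1. As \<Lambda>0 and \<Lambda>k differ only in row k, the resolvent identity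
  P - Q = P (\<Lambda>0 - \<Lambda>k) Q makes every column of P - Q a multiple of column k of P, and
  column k of Q equals column k of P because k reaches none of its parents. This gives the
  "if" direction. For "only if", evaluate the relation at the rows j1 and j2, where column k
  of P vanishes: this yields Q(j1,j2) D(j2,j2) = 1 and P(j2,j1) = D(j2,j2), i.e. paths from j2
  to j1 and back unless j1 = j2. The equivalence therefore holds for every choice of
  parameters, not only generically.\<close>

definition edge_supported :: "('n \<times> 'n) set \<Rightarrow> 'a::zero^'n^'n \<Rightarrow> bool" where
  "edge_supported E L \<longleftrightarrow> (\<forall>i j. L $ i $ j \<noteq> 0 \<longrightarrow> (j, i) \<in> E)"

lemma matrix_inv_right:
  fixes A :: "'a::semiring_1^'n^'m"
  assumes "invertible A"
  shows "A ** matrix_inv A = mat 1"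
  using someI_ex[OF assms[unfolded invertible_def]] unfolding matrix_inv_def by blast

lemma matrix_inv_left:
  fixes A :: "'a::semiring_1^'n^'m"
  assumes "invertible A"
  shows "matrix_inv A ** A = mat 1"
  using someI_ex[OF assms[unfolded invertible_def]] unfolding matrix_inv_def by blast

lemma matrix_diff_ldistrib:
  fixes A :: "'a::ring_1^'n^'m"
  shows "A ** (B - C) = A ** B - A ** C"
  by (simp add: matrix_matrix_mult_def vec_eq_iff sum_subtractf right_diff_distrib)

lemma matrix_diff_rdistrib:
  fixes A :: "'a::ring_1^'n^'m"
  shows "(A - B) ** C = A ** C - B ** C"
  by (simp add: matrix_matrix_mult_def vec_eq_iff sum_subtractf left_diff_distrib)

lemma matrix_inv_diff:
  fixes A B :: "'a::ring_1^'n^'m"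
  assumes "invertible A" and "invertible B"
  shows "matrix_inv A - matrix_inv B = matrix_inv A ** (B - A) ** matrix_inv B"
proof -
  have "matrix_inv A ** (B - A) ** matrix_inv B
      = matrix_inv A ** (B ** matrix_inv B) - (matrix_inv A ** A) ** matrix_inv B"
    by (simp add: matrix_diff_ldistrib matrix_diff_rdistrib matrix_mul_assoc)
  also have "\<dots> = matrix_inv A - matrix_inv B"
    by (simp add: matrix_inv_left matrix_inv_right assms)
  finally show ?thesis ..
qed

lemma matrix_mul_diagonal_component:
  fixes A D :: "'a::semiring_1^'n::finite^'n"
  assumes "\<forall>i j. i \<noteq> j \<longrightarrow> D $ i $ j = 0"
  shows "(A ** D) $ i $ j = A $ i $ j * D $ j $ j"
  unfolding matrix_matrix_mult_def using assms
  by (simp add: sum.remove[of _ j] sum.neutral)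

lemma matrix_mul_single_row_component:
  fixes P N Q :: "'a::semiring_1^'n::finite^'n"
  assumes "\<And>a. a \<noteq> k \<Longrightarrow> N $ a = 0"
  shows "(P ** N ** Q) $ i $ j = P $ i $ k * (N ** Q) $ k $ j"
proof -
  have "\<And>a. a \<noteq> k \<Longrightarrow> (N ** Q) $ a $ j = 0"
    using assms by (simp add: matrix_matrix_mult_def)
  then have "(P ** (N ** Q)) $ i $ j = P $ i $ k * (N ** Q) $ k $ j"
    unfolding matrix_matrix_mult_def[of P] by (simp add: sum.remove[of _ k] sum.neutral)
  then show ?thesis
    by (simp add: matrix_mul_assoc)
qed

lemma invertible_mat1_minus_edge_supported:
  fixes L :: "'a::field^'n::finite^'n"
  assumes "acyclic E" and "edge_supported E L"
  shows "invertible (mat 1 - L)"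
proof -
  have wf: "wf E"
    using finite_acyclic_wf[OF finite assms(1)] .
  have "x = 0" if "(mat 1 - L) *v x = 0" for x
  proof -
    have fixpoint: "x = L *v x"
      using that unfolding matrix_vector_mult_diff_rdistrib matrix_vector_mul_lid by simp
    have "x $ i = 0" for i
    proof (induction i rule: wf_induct_rule[OF wf])
      case (1 i)
      then have "\<forall>j\<in>UNIV. L $ i $ j * x $ j = 0"
        using assms(2) unfolding edge_supported_def by fastforce
      then have "(L *v x) $ i = 0"
        unfolding matrix_vector_mult_def vec_lambda_beta by (rule sum.neutral)
      then show ?case
        by (subst fixpoint)
    qed
    then show "x = 0"
      by (simp add: vec_eq_iff)
  qed
  then show ?thesis
    unfolding invertible_left_inverse matrix_left_invertible_ker by blast
qed

lemma matrix_inv_mat1_minus_component: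
  fixes L :: "'a::ring_1^'n::finite^'n"
  assumes "invertible (mat 1 - L)"
  shows "matrix_inv (mat 1 - L) $ i $ j
    = (if i = j then 1 else 0) + (\<Sum>b\<in>UNIV. L $ i $ b * matrix_inv (mat 1 - L) $ b $ j)"
proof -
  have "matrix_inv (mat 1 - L) = mat 1 + L ** matrix_inv (mat 1 - L)"
    using matrix_inv_right[OF assms] unfolding matrix_diff_rdistrib matrix_mul_lid
    by (simp add: diff_eq_eq add.commute)
  then have "matrix_inv (mat 1 - L) $ i $ j = (mat 1 + L ** matrix_inv (mat 1 - L)) $ i $ j"
    by (rule arg_cong)
  then show ?thesis
    by (simp add: mat_def matrix_matrix_mult_def)
qed

lemma matrix_inv_mat1_minus_nonzero_imp_path:
  fixes L :: "'a::field^'n::finite^'n"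
  assumes "acyclic E" and "edge_supported E L"
    and "matrix_inv (mat 1 - L) $ i $ j \<noteq> 0"
  shows "(j, i) \<in> E\<^sup>*"
  using assms(3)
proof (induction i rule: wf_induct_rule[OF finite_acyclic_wf[OF finite assms(1)]])
  case (1 i)
  show ?case
  proof (cases "i = j")
    case False
    then have "(\<Sum>b\<in>UNIV. L $ i $ b * matrix_inv (mat 1 - L) $ b $ j) \<noteq> 0"
      using "1.prems" matrix_inv_mat1_minus_component[of L i j]
        invertible_mat1_minus_edge_supported[OF assms(1,2)] by simp
    then obtain b where "L $ i $ b * matrix_inv (mat 1 - L) $ b $ j \<noteq> 0"
      by (meson sum.not_neutral_contains_not_neutral)
    then have "L $ i $ b \<noteq> 0" and path: "(j, b) \<in> E\<^sup>*"
      using "1.IH" assms(2) unfolding edge_supported_def by auto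
    then have "(b, i) \<in> E"
      using assms(2) unfolding edge_supported_def by blast
    with path show ?thesis
      by (rule rtrancl_into_rtrancl)
  qed simp
qed

lemma matrix_inv_mat1_minus_ancestor_zero:
  fixes L :: "'a::field^'n::finite^'n"
  assumes "acyclic E" and "edge_supported E L" and "(j, k) \<in> E\<^sup>+"
  shows "matrix_inv (mat 1 - L) $ j $ k = 0"
proof (rule ccontr)
  assume "matrix_inv (mat 1 - L) $ j $ k \<noteq> 0"
  then have "(k, j) \<in> E\<^sup>*"
    using matrix_inv_mat1_minus_nonzero_imp_path assms(1,2) by blast
  with assms(3) have "(k, k) \<in> E\<^sup>+"
    by (meson rtrancl_trancl_trancl)
  with assms(1) show False
    unfolding acyclic_def by blast
qed

lemma matrix_inv_mat1_minus_diagonal: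
  fixes L :: "'a::field^'n::finite^'n"
  assumes "acyclic E" and "edge_supported E L"
  shows "matrix_inv (mat 1 - L) $ j $ j = 1"
proof -
  have "L $ j $ b * matrix_inv (mat 1 - L) $ b $ j = 0" for b
  proof (cases "(b, j) \<in> E")
    case True
    then show ?thesis
      using matrix_inv_mat1_minus_ancestor_zero[OF assms r_into_trancl] by simp
  next
    case False
    then show ?thesis
      using assms(2) unfolding edge_supported_def by auto
  qed
  then have "(\<Sum>b\<in>UNIV. L $ j $ b * matrix_inv (mat 1 - L) $ b $ j) = 0"
    by (simp add: sum.neutral)
  then show ?thesis
    using matrix_inv_mat1_minus_component[of L j j]
      invertible_mat1_minus_edge_supported[OF assms] by simp
qed

lemma matrix_inv_mat1_minus_row_update_diff:
  fixes L L' :: "'a::field^'n::finite^'n"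
  assumes "acyclic E" and "edge_supported E L" and "edge_supported E L'"
    and "\<And>a. a \<noteq> k \<Longrightarrow> L' $ a = L $ a"
  shows "matrix_inv (mat 1 - L) $ i $ j - matrix_inv (mat 1 - L') $ i $ j
    = matrix_inv (mat 1 - L) $ i $ k * ((L - L') ** matrix_inv (mat 1 - L')) $ k $ j"
proof -
  have "matrix_inv (mat 1 - L) - matrix_inv (mat 1 - L')
      = matrix_inv (mat 1 - L) ** (L - L') ** matrix_inv (mat 1 - L')"
    using matrix_inv_diff[OF invertible_mat1_minus_edge_supported[OF assms(1,2)]
        invertible_mat1_minus_edge_supported[OF assms(1,3)]]
    by simp
  moreover have "(L - L') $ a = 0" if "a \<noteq> k" for a
    using assms(4)[OF that] by simp
  ultimately show ?thesis
    by (metis matrix_mul_single_row_component vector_minus_component)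
qed

lemma matrix_inv_mat1_minus_row_update_column:
  fixes L L' :: "'a::field^'n::finite^'n"
  assumes "acyclic E" and "edge_supported E L" and "edge_supported E L'"
    and "\<And>a. a \<noteq> k \<Longrightarrow> L' $ a = L $ a"
  shows "matrix_inv (mat 1 - L') $ i $ k = matrix_inv (mat 1 - L) $ i $ k"
proof -
  have "(L - L') $ k $ b * matrix_inv (mat 1 - L') $ b $ k = 0" for b
  proof (cases "(b, k) \<in> E")
    case True
    then show ?thesis
      using matrix_inv_mat1_minus_ancestor_zero[OF assms(1,3)] by auto
  next
    case False
    then have "L $ k $ b = 0" and "L' $ k $ b = 0"
      using assms(2,3) unfolding edge_supported_def by auto
    then show ?thesis
      by simp
  qed
  then have "((L - L') ** matrix_inv (mat 1 - L')) $ k $ k = 0"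
    by (simp add: matrix_matrix_mult_def sum.neutral)
  then show ?thesis
    using matrix_inv_mat1_minus_row_update_diff[where k = k and j = k, OF assms] by simp
qed

lemma ancestor_column_differences_proportional_iff:
  fixes L L' D :: "'a::field^'n::finite^'n"
  assumes "acyclic E" and "edge_supported E L" and "edge_supported E L'"
    and "\<And>a. a \<noteq> k \<Longrightarrow> L' $ a = L $ a"
    and D_diagonal: "\<forall>i j. i \<noteq> j \<longrightarrow> D $ i $ j = 0"
    and D_nonzero: "\<forall>j. j \<noteq> k \<longrightarrow> D $ j $ j \<noteq> 0"
    and D_k: "D $ k $ k \<noteq> 1"
    and j1: "j1 \<in> ancestors E k" and j2: "j2 \<in> ancestors E k"
  shows "(\<exists>\<alpha>. \<forall>i. matrix_inv (mat 1 - L) $ i $ j1 - (matrix_inv (mat 1 - L') ** D) $ i $ j2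
                = \<alpha> * (matrix_inv (mat 1 - L) $ i $ k - (matrix_inv (mat 1 - L') ** D) $ i $ k))
         \<longleftrightarrow> j1 = j2 \<and> D $ j1 $ j1 = 1"
    (is "(\<exists>\<alpha>. \<forall>i. ?lhs i = \<alpha> * ?rhs i) \<longleftrightarrow> _")
proof -
  define P where "P = matrix_inv (mat 1 - L)"
  define Q where "Q = matrix_inv (mat 1 - L')"
  define w where "w j = ((L - L') ** Q) $ k $ j" for j
  have diff: "P $ i $ j - Q $ i $ j = P $ i $ k * w j" for i j
    unfolding P_def Q_def w_def
    by (rule matrix_inv_mat1_minus_row_update_diff[where k = k, OF assms(1-4)])
  have lhs: "?lhs i = P $ i $ j1 - Q $ i $ j2 * D $ j2 $ j2" for i
    unfolding P_def Q_def matrix_mul_diagonal_component[OF D_diagonal] ..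
  have rhs: "?rhs i = (1 - D $ k $ k) * P $ i $ k" for i
    using matrix_inv_mat1_minus_row_update_column[where k = k and i = i, OF assms(1-4)]
    unfolding P_def Q_def matrix_mul_diagonal_component[OF D_diagonal]
    by (simp add: algebra_simps)
  have "j1 \<noteq> k" "(j1, k) \<in> E\<^sup>+" "j2 \<noteq> k" "(j2, k) \<in> E\<^sup>+"
    using j1 j2 by (auto simp: ancestors_def)
  then have P_j1_k: "P $ j1 $ k = 0" and P_j2_k: "P $ j2 $ k = 0" and "D $ j2 $ j2 \<noteq> 0"
    using matrix_inv_mat1_minus_ancestor_zero[OF assms(1,2)] D_nonzero by (auto simp: P_def)
  have P_diag: "P $ j $ j = 1" and Q_diag: "Q $ j $ j = 1" for j
    unfolding P_def Q_def using matrix_inv_mat1_minus_diagonal assms(1-3) by blast+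
  show ?thesis
  proof
    assume "\<exists>\<alpha>. \<forall>i. ?lhs i = \<alpha> * ?rhs i"
    then obtain \<alpha> where \<alpha>: "\<And>i. ?lhs i = \<alpha> * ?rhs i"
      by blast
    have Q_j1_j2: "Q $ j1 $ j2 * D $ j2 $ j2 = 1"
      using \<alpha>[of j1] unfolding lhs rhs P_j1_k P_diag by simp
    show "j1 = j2 \<and> D $ j1 $ j1 = 1"
    proof (rule ccontr)
      assume "\<not> (j1 = j2 \<and> D $ j1 $ j1 = 1)"
      then have "j1 \<noteq> j2"
        using Q_j1_j2 Q_diag by auto
      moreover have "(j2, j1) \<in> E\<^sup>*"
        using Q_j1_j2 matrix_inv_mat1_minus_nonzero_imp_path[OF assms(1,3)]
        unfolding Q_def by force
      ultimately have "P $ j2 $ j1 = 0"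
        using matrix_inv_mat1_minus_ancestor_zero[OF assms(1,2)]
        unfolding P_def by (metis rtranclD)
      moreover have "P $ j2 $ j1 = D $ j2 $ j2"
        using \<alpha>[of j2] unfolding lhs rhs P_j2_k Q_diag by simp
      ultimately show False
        using \<open>D $ j2 $ j2 \<noteq> 0\<close> by simp
    qed
  next
    assume "j1 = j2 \<and> D $ j1 $ j1 = 1"
    then have "?lhs i = P $ i $ j1 - Q $ i $ j1" for i
      unfolding lhs by (elim conjE) simp
    then have "?lhs i = w j1 / (1 - D $ k $ k) * ?rhs i" for i
      using diff[of i j1] D_k unfolding rhs by simp
    then show "\<exists>\<alpha>. \<forall>i. ?lhs i = \<alpha> * ?rhs i"
      by blast
  qed
qed

lemma edge_supported_Lam0: "edge_supported E (Lam0 E \<theta>)"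
  by (simp add: edge_supported_def Lam0_def)

lemma edge_supported_Lamk: "edge_supported E (Lamk E perfect k \<theta>)"
  by (simp add: edge_supported_def Lamk_def Lam0_def)

lemma Lamk_row_other: "a \<noteq> k \<Longrightarrow> Lamk E perfect k \<theta> $ a = Lam0 E \<theta> $ a"
  by (simp add: Lamk_def vec_eq_iff)

theorem proposition2p9:
  fixes E :: "('n::finite \<times> 'n) set" and k :: 'n and D :: "real^'n^'n" and perfect :: bool
  assumes "acyclic E"
    and "\<forall>i j. i \<noteq> j \<longrightarrow> D $ i $ j = 0"
    and "\<forall>j. j \<noteq> k \<longrightarrow> D $ j $ j \<in> {1, -1}"
    and "D $ k $ k \<notin> {0, 1, -1}"
  shows "AE \<theta> in PiM (param_index E k) (\<lambda>_. lborel).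
    \<forall>j1\<in>ancestors E k. \<forall>j2\<in>ancestors E k.
      (\<exists>\<alpha>::real. \<forall>i.
          matrix_inv (mat 1 - Lam0 E \<theta>) $ i $ j1
            - (matrix_inv (mat 1 - Lamk E perfect k \<theta>) ** D) $ i $ j2
        = \<alpha> * (matrix_inv (mat 1 - Lam0 E \<theta>) $ i $ k
            - (matrix_inv (mat 1 - Lamk E perfect k \<theta>) ** D) $ i $ k))
      \<longleftrightarrow> (j1 = j2 \<and> D $ j1 $ j1 = 1)"
proof -
  have "\<forall>j. j \<noteq> k \<longrightarrow> D $ j $ j \<noteq> 0" and "D $ k $ k \<noteq> 1"
    using assms(3,4) by force+
  then show ?thesis
    using ancestor_column_differences_proportional_iff[where k = k,
        OF assms(1) edge_supported_Lam0 edge_supported_Lamk Lamk_row_other assms(2)]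
    by (intro AE_I2 ballI) simp
qed

end
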